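(* Consider the DP-Ditto algorithm described in the context, with personalized learning rate $\eta_{\mathrm{L}}>0$ and weighting coefficient $\lambda\in[0,2]$. Assume: (i) each $F_n$ is $\mu$-strongly convex and $L$-smooth, so that in particular $F(\boldsymbol{\omega})-F(\boldsymbol{\omega}^{\ast})\le \frac{1}{2\mu}\|\nabla F(\boldsymbol{\omega})\|^2$ and $\|\nabla F(\boldsymbol{\omega})-\nabla F(\boldsymbol{\omega}')\|\le L\|\boldsymbol{\omega}-\boldsymbol{\omega}'\|$; (ii) $\eta_{\mathrm{G}}\le 2/L$ and $\mu>\frac{2-2\lambda}{2-\lambda}$; (iii) the expected squared gradient norms of each $F_n$ at the iterates are bounded: $\mathbb{E}\|\nabla F_n(\cdot)\|^2\le G_0^2$ evaluated at the global and personalized iterates; (iv) $\|\boldsymbol{u}_n^{\ast}-\boldsymbol{\omega}^{\ast}\|\le M$ for every $n$. Then for every client $n$ and every round $t$, $$\mathbb{E}\big[\|\tilde{\boldsymbol{\varpi}}_n^{t+1}-\boldsymbol{\varpi}_n^{\ast}\|^2\big]\le \varepsilon_{\mathrm{L}}\,\mathbb{E}\big[\|\tilde{\boldsymbol{\varpi}}_n^{t}-\boldsymbol{\varpi}_n^{\ast}\|^2\big]+(\eta_{\mathrm{L}}^2+\eta_{\mathrm{L}}^2\lambda^2)G+\frac{4\eta_{\mathrm{L}}^2\lambda^2+2\eta_{\mathrm{L}}\lambda^2}{\mu}\,\mathbb{E}\big[F(\tilde{\boldsymbol{\omega}}^t)-F(\boldsymbol{\omega}^{\ast})\big],$$ where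 $G=\Big(\big(1-\frac{\lambda}{2}\big)G_0+\lambda\big(\frac{G_0}{\mu}+M\big)\Big)^2$ and $\varepsilon_{\mathrm{L}}=1-\eta_{\mathrm{L}}\big(\big(1-\frac{\lambda}{2}\big)\mu+\lambda\big)+\eta_{\mathrm{L}}$. Moreover, $\varepsilon_{\mathrm{L}}$ is increasing in $\lambda$ when $\mu>2$.
   Context: There are $N$ clients with local loss functions $F_n:\mathbb{R}^d\to\mathbb{R}$, $n=1,\dots,N$, and global loss $F(\boldsymbol{\omega})=\frac{1}{N}\sum_{n=1}^N F_n(\boldsymbol{\omega})$. Let $\boldsymbol{\omega}^{\ast}=\arg\min_{\boldsymbol{\omega}}F(\boldsymbol{\omega})$, $\boldsymbol{u}_n^{\ast}=\arg\min_{\boldsymbol{u}}F_n(\boldsymbol{u})$. For $\lambda\in[0,2]$ define the personalized objective $f_n(\boldsymbol{\varpi};\boldsymbol{\omega})=(1-\frac{\lambda}{2})F_n(\boldsymbol{\varpi})+\frac{\lambda}{2}\|\boldsymbol{\varpi}-\boldsymbol{\omega}\|^2$ and $\boldsymbol{\varpi}_n^{\ast}=\arg\min_{\boldsymbol{\varpi}}f_n(\boldsymbol{\varpi};\boldsymbol{\omega}^{\ast})$. DP-Ditto: given a clipping threshold $C>0$, learning rates $\eta_{\mathrm{G}},\eta_{\mathrm{L}}>0$, privacy parameters $\epsilon>0,\delta\in(0,1)$, a number of rounds $T$, a sensitivity $\Delta s>0$ (equal to $2C/|\mathcal{D}_n|$ with $|\mathcal{D}_n|$ the local dataset size), initial global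 model $\tilde{\boldsymbol{\omega}}^0=\boldsymbol{\omega}^0$ and personalized models $\tilde{\boldsymbol{\varpi}}_n^0=\boldsymbol{\varpi}_n^0$, in each round $t=0,\dots,T-1$ every client $n$ sets $\boldsymbol{u}_n^t=\tilde{\boldsymbol{\omega}}^t$, computes $\boldsymbol{u}_n^{t+1}=\boldsymbol{u}_n^t-\eta_{\mathrm{G}}\nabla F_n(\boldsymbol{u}_n^t)$, clips $\boldsymbol{u}_n^{t+1}\leftarrow \boldsymbol{u}_n^{t+1}/\max(1,\|\boldsymbol{u}_n^{t+1}\|/C)$, uploads $\tilde{\boldsymbol{u}}_n^{t+1}=\boldsymbol{u}_n^{t+1}+\mathbf{z}_n^{t+1}$ with $\mathbf{z}_n^{t+1}\sim\mathcal{N}(0,\sigma_u^2\mathbf{I}_d)$ i.i.d. over $n,t$ and $\sigma_u=\frac{\Delta s\sqrt{2TN\ln(1/\delta)}}{\epsilon N}$, and updates its personalized model $\tilde{\boldsymbol{\varpi}}_n^{t+1}=\tilde{\boldsymbol{\varpi}}_n^t-\eta_{\mathrm{L}}\big((1-\frac{\lambda}{2})\nabla F_n(\tilde{\boldsymbol{\varpi}}_n^t)+\lambda(\tilde{\boldsymbol{\varpi}}_n^t-\tilde{\boldsymbol{\omega}}^t)\big)$; the server sets $\tilde{\boldsymbol{\omega}}^{t+1}=\frac1N\sum_n\tilde{\boldsymbol{u}}_n^{t+1}$. Expectations are over the DP noise. *)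

theory Defs
  imports "HOL-Analysis.Analysis" "HOL-Probability.Probability"
begin

definition strongly_convex :: "real \<Rightarrow> ('v::real_inner \<Rightarrow> real) \<Rightarrow> bool" where
  "strongly_convex mu f \<longleftrightarrow> convex_on UNIV (\<lambda>x. f x - mu / 2 * (norm x)\<^sup>2)"

definition clip :: "real \<Rightarrow> 'v::real_normed_vector \<Rightarrow> 'v" where
  "clip C u = (1 / max 1 (norm u / C)) *\<^sub>R u"

text \<open>Noisy global model of DP-Ditto. gF n is the gradient of F_n; z n t is the noise
  added by client n in round t (t = 1..T).\<close>
primrec glob :: "(nat \<Rightarrow> 'v \<Rightarrow> 'v) \<Rightarrow> nat \<Rightarrow> real \<Rightarrow> real \<Rightarrow> 'v
    \<Rightarrow> (nat \<Rightarrow> nat \<Rightarrow> 'a \<Rightarrow> 'v::euclidean_space) \<Rightarrow> nat \<Rightarrow> 'a \<Rightarrow> 'v" where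
  "glob gF N C etaG w0 z 0 = (\<lambda>x. w0)"
| "glob gF N C etaG w0 z (Suc t) = (\<lambda>x. (1 / real N) *\<^sub>R
     (\<Sum>n<N. clip C (glob gF N C etaG w0 z t x - etaG *\<^sub>R gF n (glob gF N C etaG w0 z t x))
              + z n (Suc t) x))"

primrec pers :: "(nat \<Rightarrow> 'v \<Rightarrow> 'v) \<Rightarrow> nat \<Rightarrow> real \<Rightarrow> real \<Rightarrow> 'v
    \<Rightarrow> (nat \<Rightarrow> nat \<Rightarrow> 'a \<Rightarrow> 'v::euclidean_space) \<Rightarrow> real \<Rightarrow> real \<Rightarrow> (nat \<Rightarrow> 'v)
    \<Rightarrow> nat \<Rightarrow> nat \<Rightarrow> 'a \<Rightarrow> 'v" where
  "pers gF N C etaG w0 z etaL lam p0 n 0 = (\<lambda>x. p0 n)"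
| "pers gF N C etaG w0 z etaL lam p0 n (Suc t) = (\<lambda>x.
     pers gF N C etaG w0 z etaL lam p0 n t x
     - etaL *\<^sub>R ((1 - lam / 2) *\<^sub>R gF n (pers gF N C etaG w0 z etaL lam p0 n t x)
                 + lam *\<^sub>R (pers gF N C etaG w0 z etaL lam p0 n t x - glob gF N C etaG w0 z t x)))"

end

theory Submission
  imports Defs
begin

(*
  Write a = (1 - lambda/2) mu + lambda for the strong convexity modulus of f_n, D for the error of
  the personalized model and V for its update direction, so that the new error is
  D - eta_L V = (1 - eta_L a) D + eta_L (a D - V). Optimality of varpi_n^* and strong monotonicity
  of grad F_n give <D, a D - V> <= lambda <D, omega^t - omega^*>, and quadratic growth of F around
  omega^* bounds |omega^t - omega^*|^2 by 2/mu times the optimality gap of omega^t. The residual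
  a D - V is a sum of terms controlled by |grad F_n| at the two current models (through
  |v - u_n^*| <= |grad F_n v| / mu) and by a |varpi_n^* - u_n^*| <= lambda M, so its second moment
  is at most G. This settles eta_L a <= 1. For eta_L a > 1 the same distance bounds place both the
  current and the next personalized model within sqrt G / a of varpi_n^* in mean square, which
  suffices because (eta_L a)^2 >= 1; this is where (iii) is needed at round t + 1. The argument
  even yields the coefficients eta_L^2 and 2 eta_L lambda^2 / mu. It only uses a > 0, true for
  all lambda in [0, 2].
*)

lemma strongly_convex_above_tangent:
  fixes f :: "'v::euclidean_space \<Rightarrow> real"
  assumes sc: "strongly_convex mu f"
    and deriv: "\<And>w. (f has_derivative (\<lambda>h. g w \<bullet> h)) (at w)"
  shows "f x + g x \<bullet> (y - x) + mu / 2 * (norm (y - x))\<^sup>2 \<le> f y"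
proof -
  define v where "v = y - x"
  define \<phi> where "\<phi> = (\<lambda>t::real. f (x + t *\<^sub>R v) - mu / 2 * ((x + t *\<^sub>R v) \<bullet> (x + t *\<^sub>R v)))"
  have h: "convex_on UNIV (\<lambda>z. f z - mu / 2 * (z \<bullet> z))"
    using sc unfolding strongly_convex_def by (simp add: power2_norm_eq_inner)
  have "convex_on UNIV \<phi>"
  proof (rule convex_onI)
    fix u s t :: real
    assume "0 < u" "u < 1"
    have "x + ((1 - u) * s + u * t) *\<^sub>R v = (1 - u) *\<^sub>R (x + s *\<^sub>R v) + u *\<^sub>R (x + t *\<^sub>R v)"
      by (simp add: algebra_simps)
    then show "\<phi> ((1 - u) *\<^sub>R s + u *\<^sub>R t) \<le> (1 - u) * \<phi> s + u * \<phi> t"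
      using convex_onD[OF h, of u "x + s *\<^sub>R v" "x + t *\<^sub>R v"] \<open>0 < u\<close> \<open>u < 1\<close>
      unfolding \<phi>_def by simp
  qed auto
  moreover have "(\<phi> has_real_derivative (g x \<bullet> v - mu * (x \<bullet> v))) (at 0)"
  proof -
    have line: "((\<lambda>t::real. x + t *\<^sub>R v) has_derivative (\<lambda>t. t *\<^sub>R v)) (at 0)"
      by (auto intro!: derivative_eq_intros)
    have "((\<lambda>t. f (x + t *\<^sub>R v)) has_derivative (\<lambda>t. g x \<bullet> (t *\<^sub>R v))) (at 0)"
      using has_derivative_compose[OF line deriv[of "x + 0 *\<^sub>R v"]] by simp
    then show ?thesis
      unfolding \<phi>_def has_field_derivative_def
      by (auto intro!: derivative_eq_intros line simp: fun_eq_iff algebra_simps inner_commute)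
  qed
  ultimately have "\<phi> 1 - \<phi> 0 \<ge> (g x \<bullet> v - mu * (x \<bullet> v)) * (1 - 0)"
    by (intro convex_on_imp_above_tangent) auto
  then show ?thesis
    unfolding \<phi>_def v_def power2_norm_eq_inner by (simp add: algebra_simps inner_commute)
qed

lemma strongly_convex_gradient_monotone:
  fixes f :: "'v::euclidean_space \<Rightarrow> real"
  assumes sc: "strongly_convex mu f"
    and deriv: "\<And>w. (f has_derivative (\<lambda>h. g w \<bullet> h)) (at w)"
  shows "mu * (norm (x - y))\<^sup>2 \<le> (g x - g y) \<bullet> (x - y)"
  using strongly_convex_above_tangent[OF sc deriv, of x y]
    strongly_convex_above_tangent[OF sc deriv, of y x]
  by (simp add: norm_minus_commute inner_diff_left inner_diff_right)

lemma has_derivative_minimum_gradient_zero: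
  fixes f :: "'v::euclidean_space \<Rightarrow> real"
  assumes "(f has_derivative (\<lambda>h. G \<bullet> h)) (at x)" and "\<And>y. f x \<le> f y"
  shows "G = 0"
proof -
  have "(\<lambda>h. G \<bullet> h) = (\<lambda>h. 0)"
    by (rule differential_zero_maxmin[of x UNIV]) (use assms in auto)
  then show ?thesis
    by (metis inner_eq_zero_iff)
qed

lemma strongly_convex_inner_minimizer_ge:
  fixes f :: "'v::euclidean_space \<Rightarrow> real"
  assumes sc: "strongly_convex mu f"
    and deriv: "\<And>w. (f has_derivative (\<lambda>h. g w \<bullet> h)) (at w)"
    and min: "\<And>y. f u \<le> f y"
  shows "mu * (norm (w - u))\<^sup>2 \<le> g w \<bullet> (w - u)"
  using strongly_convex_gradient_monotone[OF sc deriv, of w u]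
    has_derivative_minimum_gradient_zero[OF deriv min]
  by simp

lemma strongly_convex_dist_minimizer_le:
  fixes f :: "'v::euclidean_space \<Rightarrow> real"
  assumes sc: "strongly_convex mu f"
    and deriv: "\<And>w. (f has_derivative (\<lambda>h. g w \<bullet> h)) (at w)"
    and min: "\<And>y. f u \<le> f y"
  shows "mu * norm (w - u) \<le> norm (g w)"
proof (cases "w = u")
  case False
  have "mu * norm (w - u) * norm (w - u) \<le> norm (g w) * norm (w - u)"
    using strongly_convex_inner_minimizer_ge[OF sc deriv min, of w]
      norm_cauchy_schwarz[of "g w" "w - u"]
    by (simp add: power2_eq_square mult.assoc)
  then show ?thesis
    using False by simp
qed simp

lemma strongly_convex_norm_gradient_shift_le:
  fixes f :: "'v::euclidean_space \<Rightarrow> real"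
  assumes sc: "strongly_convex mu f"
    and deriv: "\<And>w. (f has_derivative (\<lambda>h. g w \<bullet> h)) (at w)"
    and min: "\<And>y. f u \<le> f y" and mu: "0 \<le> mu"
  shows "norm (g w - mu *\<^sub>R (w - u)) \<le> norm (g w)"
proof (rule power2_le_imp_le)
  have "mu * (mu * (norm (w - u))\<^sup>2) \<le> mu * (g w \<bullet> (w - u))"
    using strongly_convex_inner_minimizer_ge[OF sc deriv min] mu by (rule mult_left_mono)
  moreover have "0 \<le> mu * (mu * (norm (w - u))\<^sup>2)"
    using mu by simp
  moreover have "(norm (g w - mu *\<^sub>R (w - u)))\<^sup>2
      = (norm (g w))\<^sup>2 - 2 * (mu * (g w \<bullet> (w - u))) + mu * (mu * (norm (w - u))\<^sup>2)"
    unfolding power2_norm_eq_inner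
    by (simp add: inner_diff_left inner_diff_right inner_commute power2_eq_square algebra_simps)
  ultimately show "(norm (g w - mu *\<^sub>R (w - u)))\<^sup>2 \<le> (norm (g w))\<^sup>2"
    by linarith
qed simp

lemma prox_minimizer_stationary:
  fixes f :: "'v::euclidean_space \<Rightarrow> real"
  assumes deriv: "(f has_derivative (\<lambda>h. G \<bullet> h)) (at p)"
    and min: "\<And>q. k * f p + lam / 2 * (norm (p - c))\<^sup>2 \<le> k * f q + lam / 2 * (norm (q - c))\<^sup>2"
  shows "k *\<^sub>R G + lam *\<^sub>R (p - c) = 0"
proof (rule has_derivative_minimum_gradient_zero)
  have "((\<lambda>q. k * f q + lam / 2 * ((q - c) \<bullet> (q - c))) has_derivative
      (\<lambda>h. k * (G \<bullet> h) + lam / 2 * ((p - c) \<bullet> h + h \<bullet> (p - c)))) (at p)"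
    by (auto intro!: derivative_eq_intros deriv)
  then show "((\<lambda>q. k * f q + lam / 2 * (norm (q - c))\<^sup>2) has_derivative
      (\<lambda>h. (k *\<^sub>R G + lam *\<^sub>R (p - c)) \<bullet> h)) (at p)"
    unfolding power2_norm_eq_inner
    by (rule has_derivative_eq_rhs) (auto simp: fun_eq_iff algebra_simps inner_commute)
qed (use min in auto)

lemma prox_minimizer_inner_ge:
  fixes f :: "'v::euclidean_space \<Rightarrow> real"
  assumes sc: "strongly_convex mu f"
    and deriv: "\<And>w. (f has_derivative (\<lambda>h. g w \<bullet> h)) (at w)"
    and min: "\<And>q. k * f p + lam / 2 * (norm (p - c))\<^sup>2 \<le> k * f q + lam / 2 * (norm (q - c))\<^sup>2"
    and k: "0 \<le> k"
  shows "(k * mu + lam) * (norm (w - p))\<^sup>2 \<le> (w - p) \<bullet> (k *\<^sub>R g w + lam *\<^sub>R (w - c))"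
proof -
  have "k *\<^sub>R g w + lam *\<^sub>R (w - c) = k *\<^sub>R (g w - g p) + lam *\<^sub>R (w - p)"
    using prox_minimizer_stationary[OF deriv min] by (simp add: algebra_simps)
  then have "(w - p) \<bullet> (k *\<^sub>R g w + lam *\<^sub>R (w - c))
      = k * ((g w - g p) \<bullet> (w - p)) + lam * (norm (w - p))\<^sup>2"
    by (simp add: inner_add_right inner_commute power2_norm_eq_inner)
  moreover have "k * (mu * (norm (w - p))\<^sup>2) \<le> k * ((g w - g p) \<bullet> (w - p))"
    using strongly_convex_gradient_monotone[OF sc deriv] k by (rule mult_left_mono)
  ultimately show ?thesis
    by (simp add: algebra_simps)
qed

lemma prox_minimizer_dist_le:
  fixes f :: "'v::euclidean_space \<Rightarrow> real"
  assumes sc: "strongly_convex mu f"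
    and deriv: "\<And>w. (f has_derivative (\<lambda>h. g w \<bullet> h)) (at w)"
    and min: "\<And>q. k * f p + lam / 2 * (norm (p - c))\<^sup>2 \<le> k * f q + lam / 2 * (norm (q - c))\<^sup>2"
    and min_f: "\<And>y. f u \<le> f y"
    and k: "0 \<le> k" and lam: "0 \<le> lam"
  shows "(k * mu + lam) * norm (p - u) \<le> lam * norm (u - c)"
proof (cases "p = u")
  case False
  have "(k * mu + lam) * (norm (u - p))\<^sup>2 \<le> lam * ((u - p) \<bullet> (u - c))"
    using prox_minimizer_inner_ge[OF sc deriv min k, of u]
      has_derivative_minimum_gradient_zero[OF deriv min_f]
    by simp
  also have "\<dots> \<le> lam * (norm (u - p) * norm (u - c))"
    by (rule mult_left_mono[OF norm_cauchy_schwarz lam])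
  finally show ?thesis
    using False by (simp add: power2_eq_square norm_minus_commute mult.assoc mult.left_commute)
qed (simp add: lam)

lemma norm_diff_scaleR_le:
  fixes D V :: "'v::real_inner"
  assumes eta: "0 \<le> eta" "0 \<le> eta * a" "eta * a \<le> 1" and c: "0 \<le> c"
    and inner_le: "2 * (D \<bullet> (a *\<^sub>R D - V)) \<le> (norm D)\<^sup>2 + c"
  shows "(norm (D - eta *\<^sub>R V))\<^sup>2
    \<le> (1 - eta * a + eta) * (norm D)\<^sup>2 + eta * c + eta\<^sup>2 * (norm (a *\<^sub>R D - V))\<^sup>2"
proof -
  define R where "R = a *\<^sub>R D - V"
  have "D - eta *\<^sub>R V = (1 - eta * a) *\<^sub>R D + eta *\<^sub>R R"
    by (simp add: R_def algebra_simps)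
  then have "(norm (D - eta *\<^sub>R V))\<^sup>2 = (norm ((1 - eta * a) *\<^sub>R D + eta *\<^sub>R R))\<^sup>2"
    by simp
  also have "\<dots> = (1 - eta * a)\<^sup>2 * (norm D)\<^sup>2 + eta * (1 - eta * a) * (2 * (D \<bullet> R)) + eta\<^sup>2 * (norm R)\<^sup>2"
    unfolding power2_norm_eq_inner
    by (simp add: inner_add_left inner_add_right inner_commute power2_eq_square algebra_simps)
  also have "\<dots> \<le> (1 - eta * a)\<^sup>2 * (norm D)\<^sup>2 + eta * (1 - eta * a) * ((norm D)\<^sup>2 + c)
      + eta\<^sup>2 * (norm R)\<^sup>2"
    using eta inner_le unfolding R_def by (intro add_mono mult_left_mono) auto
  also have "\<dots> = (1 - eta * a + eta) * (norm D)\<^sup>2 + eta * c + eta\<^sup>2 * (norm R)\<^sup>2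
      - eta * a * ((1 - eta * a + eta) * (norm D)\<^sup>2 + eta * c)"
    by (simp add: power2_eq_square algebra_simps)
  also have "\<dots> \<le> (1 - eta * a + eta) * (norm D)\<^sup>2 + eta * c + eta\<^sup>2 * (norm R)\<^sup>2"
    using eta c by simp
  finally show ?thesis
    unfolding R_def .
qed

lemma (in prob_space) expectation_le_of_second_moment_le:
  fixes p :: "'a \<Rightarrow> real"
  assumes "p \<in> borel_measurable M" and "integrable M (\<lambda>x. (p x)\<^sup>2)"
    and "expectation (\<lambda>x. (p x)\<^sup>2) \<le> \<gamma>\<^sup>2" and "0 \<le> \<gamma>"
  shows "expectation p \<le> \<gamma>"
proof (rule power2_le_imp_le)
  have "integrable M p"
    using assms(1,2) by (rule square_integrable_imp_integrable)
  then have "(expectation p)\<^sup>2 \<le> expectation (\<lambda>x. (p x)\<^sup>2)"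
    using variance_eq[of p] variance_positive[of p] assms(2) by simp
  then show "(expectation p)\<^sup>2 \<le> \<gamma>\<^sup>2"
    using assms(3) by linarith
qed (rule assms(4))

lemma (in prob_space) expectation_square_affine_le:
  fixes p q :: "'a \<Rightarrow> real"
  assumes p: "p \<in> borel_measurable M" "\<And>x. 0 \<le> p x" "integrable M (\<lambda>x. (p x)\<^sup>2)"
      "expectation (\<lambda>x. (p x)\<^sup>2) \<le> \<gamma>\<^sup>2"
    and q: "q \<in> borel_measurable M" "\<And>x. 0 \<le> q x" "integrable M (\<lambda>x. (q x)\<^sup>2)"
      "expectation (\<lambda>x. (q x)\<^sup>2) \<le> \<gamma>\<^sup>2"
    and nonneg: "0 \<le> \<gamma>" "0 \<le> a" "0 \<le> b" "0 \<le> c"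
  shows "integrable M (\<lambda>x. (a * p x + b * q x + c)\<^sup>2)"
    and "expectation (\<lambda>x. (a * p x + b * q x + c)\<^sup>2) \<le> ((a + b) * \<gamma> + c)\<^sup>2"
proof -
  have int_p: "integrable M p" and int_q: "integrable M q"
    using p(1,3) q(1,3) by (auto intro: square_integrable_imp_integrable)
  have pq_le: "p x * q x \<le> ((p x)\<^sup>2 + (q x)\<^sup>2) / 2" for x
    using sum_squares_bound[of "p x" "q x"] by (simp add: power2_eq_square)
  have int_pq: "integrable M (\<lambda>x. p x * q x)"
    by (rule Bochner_Integration.integrable_bound[where f = "\<lambda>x. ((p x)\<^sup>2 + (q x)\<^sup>2) / 2"])
      (use p q pq_le in auto)
  have "expectation (\<lambda>x. p x * q x) \<le> expectation (\<lambda>x. ((p x)\<^sup>2 + (q x)\<^sup>2) / 2)"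
    using p q pq_le int_pq by (intro integral_mono) auto
  also have "\<dots> \<le> \<gamma>\<^sup>2"
    using p q by simp
  finally have E_pq: "expectation (\<lambda>x. p x * q x) \<le> \<gamma>\<^sup>2" .
  have E_p: "expectation p \<le> \<gamma>" and E_q: "expectation q \<le> \<gamma>"
    using p q nonneg by (auto intro: expectation_le_of_second_moment_le)
  have expand: "(\<lambda>x. (a * p x + b * q x + c)\<^sup>2) = (\<lambda>x. a\<^sup>2 * (p x)\<^sup>2 + b\<^sup>2 * (q x)\<^sup>2
      + (2 * a * b) * (p x * q x) + (2 * a * c) * p x + (2 * b * c) * q x + c\<^sup>2)"
    by (simp add: fun_eq_iff power2_eq_square algebra_simps)
  show "integrable M (\<lambda>x. (a * p x + b * q x + c)\<^sup>2)"
    unfolding expand using p q int_p int_q int_pq by simp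
  have "expectation (\<lambda>x. (a * p x + b * q x + c)\<^sup>2)
      = a\<^sup>2 * expectation (\<lambda>x. (p x)\<^sup>2) + b\<^sup>2 * expectation (\<lambda>x. (q x)\<^sup>2)
        + (2 * a * b) * expectation (\<lambda>x. p x * q x) + (2 * a * c) * expectation p
        + (2 * b * c) * expectation q + c\<^sup>2"
    unfolding expand using p q int_p int_q int_pq by (simp add: prob_space)
  also have "\<dots> \<le> a\<^sup>2 * \<gamma>\<^sup>2 + b\<^sup>2 * \<gamma>\<^sup>2 + (2 * a * b) * \<gamma>\<^sup>2
      + (2 * a * c) * \<gamma> + (2 * b * c) * \<gamma> + c\<^sup>2"
    using p q nonneg E_pq E_p E_q by (intro add_mono mult_left_mono order_refl) auto
  also have "\<dots> = ((a + b) * \<gamma> + c)\<^sup>2"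
    by (simp add: power2_eq_square algebra_simps)
  finally show "expectation (\<lambda>x. (a * p x + b * q x + c)\<^sup>2) \<le> ((a + b) * \<gamma> + c)\<^sup>2" .
qed

(* For C <= 0 the clipping map is the identity, so no sign condition on C is needed. *)
lemma borel_measurable_clip: "clip C \<in> borel_measurable (borel :: 'v::euclidean_space measure)"
proof -
  have "continuous_on UNIV (\<lambda>u::'v. (1 / max 1 (norm u * inverse C)) *\<^sub>R u)"
    by (intro continuous_intros) auto
  then show ?thesis
    unfolding clip_def[abs_def] divide_inverse[of "norm _"] by (rule borel_measurable_continuous_onI)
qed

lemma borel_measurable_glob:
  assumes gF: "\<And>n. n < N \<Longrightarrow> gF n \<in> borel_measurable borel"
    and z: "\<And>n s. n < N \<Longrightarrow> s \<in> {1..t} \<Longrightarrow> z n s \<in> borel_measurable M"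
  shows "glob gF N C etaG w0 z t \<in> borel_measurable M"
  using z
proof (induction t)
  case (Suc t)
  then have glob_t: "glob gF N C etaG w0 z t \<in> borel_measurable M"
    by simp
  have "(\<lambda>x. clip C (glob gF N C etaG w0 z t x - etaG *\<^sub>R gF n (glob gF N C etaG w0 z t x))
      + z n (Suc t) x) \<in> borel_measurable M" if "n < N" for n
    using measurable_compose[OF glob_t gF[OF that]] Suc.prems[OF that] glob_t
    by (intro borel_measurable_add measurable_compose[OF _ borel_measurable_clip]
        borel_measurable_diff borel_measurable_scaleR) auto
  then show ?case
    by simp
qed simp

lemma borel_measurable_pers:
  assumes gF: "\<And>n. n < N \<Longrightarrow> gF n \<in> borel_measurable borel"
    and z: "\<And>n s. n < N \<Longrightarrow> s \<in> {1..t} \<Longrightarrow> z n s \<in> borel_measurable M"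
    and n: "n < N"
  shows "pers gF N C etaG w0 z etaL lam p0 n t \<in> borel_measurable M"
  using z
proof (induction t)
  case (Suc t)
  then have "pers gF N C etaG w0 z etaL lam p0 n t \<in> borel_measurable M"
    and "glob gF N C etaG w0 z t \<in> borel_measurable M"
    by (auto intro: borel_measurable_glob[OF gF])
  then show ?case
    using measurable_compose[OF _ gF[OF n]]
    by (auto intro!: borel_measurable_add borel_measurable_diff borel_measurable_scaleR)
qed simp

locale ditto_objectives =
  fixes Fs :: "nat \<Rightarrow> 'v::euclidean_space \<Rightarrow> real" and gF :: "nat \<Rightarrow> 'v \<Rightarrow> 'v"
    and N :: nat and mu lam Mb :: real and wstar :: 'v and ustar pstar :: "nat \<Rightarrow> 'v"
  assumes N_pos: "N \<ge> 1"
    and grad: "\<And>n w. n < N \<Longrightarrow> (Fs n has_derivative (\<lambda>h. gF n w \<bullet> h)) (at w)"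
    and grad_continuous: "\<And>n. n < N \<Longrightarrow> continuous_on UNIV (gF n)"
    and mu_pos: "mu > 0"
    and sconv: "\<And>n. n < N \<Longrightarrow> strongly_convex mu (Fs n)"
    and lam_range: "0 \<le> lam" "lam \<le> 2"
    and wstar_min: "\<And>w. (\<Sum>n<N. Fs n wstar) / real N \<le> (\<Sum>n<N. Fs n w) / real N"
    and ustar_min: "\<And>n u. n < N \<Longrightarrow> Fs n (ustar n) \<le> Fs n u"
    and pstar_min: "\<And>n p. n < N \<Longrightarrow>
         (1 - lam / 2) * Fs n (pstar n) + lam / 2 * (norm (pstar n - wstar))\<^sup>2
       \<le> (1 - lam / 2) * Fs n p + lam / 2 * (norm (p - wstar))\<^sup>2"
    and M_bd: "\<And>n. n < N \<Longrightarrow> norm (ustar n - wstar) \<le> Mb"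
begin

definition modulus :: real where
  "modulus = (1 - lam / 2) * mu + lam"

definition gap :: "'v \<Rightarrow> real" where
  "gap v = (\<Sum>m<N. Fs m v) / real N - (\<Sum>m<N. Fs m wstar) / real N"

lemma weight_nonneg: "0 \<le> 1 - lam / 2"
  using lam_range by simp

lemma modulus_pos: "0 < modulus"
  using mu_pos lam_range unfolding modulus_def
  by (cases "lam = 0") (auto intro: add_nonneg_pos add_pos_nonneg)

lemma Mb_nonneg: "0 \<le> Mb"
  using M_bd[of 0] N_pos by (meson norm_ge_zero order_trans less_le_trans zero_less_one)

lemma gap_quadratic_growth: "mu / 2 * (norm (v - wstar))\<^sup>2 \<le> gap v"
proof -
  have "((\<lambda>w. (\<Sum>m<N. Fs m w) / real N) has_derivative
      (\<lambda>h. ((1 / real N) *\<^sub>R (\<Sum>m<N. gF m wstar)) \<bullet> h)) (at wstar)"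
    using N_pos by (auto intro!: derivative_eq_intros grad simp: inner_sum_left)
  then have "(1 / real N) *\<^sub>R (\<Sum>m<N. gF m wstar) = 0"
    using wstar_min by (rule has_derivative_minimum_gradient_zero)
  then have grad_sum: "(\<Sum>m<N. gF m wstar) = 0"
    using N_pos by simp
  have "(\<Sum>m<N. Fs m wstar + gF m wstar \<bullet> (v - wstar) + mu / 2 * (norm (v - wstar))\<^sup>2)
      \<le> (\<Sum>m<N. Fs m v)"
    using strongly_convex_above_tangent[OF sconv grad] by (intro sum_mono) simp
  then have "real N * (mu / 2 * (norm (v - wstar))\<^sup>2) \<le> (\<Sum>m<N. Fs m v) - (\<Sum>m<N. Fs m wstar)"
    by (simp add: sum.distrib inner_sum_left[symmetric] grad_sum)
  moreover have "real N > 0"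
    using N_pos by simp
  ultimately show ?thesis
    unfolding gap_def by (simp add: diff_divide_distrib[symmetric] pos_le_divide_eq mult.commute)
qed

lemma gap_nonneg: "0 \<le> gap v"
  using gap_quadratic_growth[of v] mu_pos
  by (meson order_trans zero_le_divide_iff zero_le_mult_iff zero_le_numeral zero_le_power2 less_imp_le)

lemma dist_ustar_le: "n < N \<Longrightarrow> norm (w - ustar n) \<le> norm (gF n w) / mu"
  using strongly_convex_dist_minimizer_le[OF sconv grad ustar_min] mu_pos
  by (simp add: pos_le_divide_eq mult.commute)

lemma gap_le:
  "gap v \<le> (\<Sum>m<N. (norm (gF m v))\<^sup>2 / mu + Mb * norm (gF m v)) / real N"
proof -
  have "Fs m v - Fs m wstar \<le> (norm (gF m v))\<^sup>2 / mu + Mb * norm (gF m v)" if m: "m < N" for m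
  proof -
    have "0 \<le> mu / 2 * (norm (wstar - v))\<^sup>2"
      using mu_pos by simp
    then have "Fs m v - Fs m wstar \<le> gF m v \<bullet> (v - wstar)"
      using strongly_convex_above_tangent[OF sconv[OF m] grad[OF m], of v wstar]
      unfolding inner_diff_right by linarith
    also have "\<dots> \<le> norm (gF m v) * norm (v - wstar)"
      by (rule norm_cauchy_schwarz)
    also have "\<dots> \<le> norm (gF m v) * (norm (gF m v) / mu + Mb)"
    proof (rule mult_left_mono)
      have "norm (v - wstar) \<le> norm (v - ustar m) + norm (ustar m - wstar)"
        using norm_triangle_ineq[of "v - ustar m" "ustar m - wstar"] by simp
      then show "norm (v - wstar) \<le> norm (gF m v) / mu + Mb"
        using dist_ustar_le[OF m, of v] M_bd[OF m] by linarith
    qed simp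
    finally show ?thesis
      by (simp add: power2_eq_square algebra_simps)
  qed
  then have "(\<Sum>m<N. Fs m v - Fs m wstar) \<le> (\<Sum>m<N. (norm (gF m v))\<^sup>2 / mu + Mb * norm (gF m v))"
    by (intro sum_mono) simp
  then show ?thesis
    unfolding gap_def diff_divide_distrib[symmetric] sum_subtractf[symmetric]
    by (rule divide_right_mono) simp
qed

lemma pstar_inner_ge:
  "n < N \<Longrightarrow> modulus * (norm (w - pstar n))\<^sup>2
    \<le> (w - pstar n) \<bullet> ((1 - lam / 2) *\<^sub>R gF n w + lam *\<^sub>R (w - wstar))"
  unfolding modulus_def using prox_minimizer_inner_ge[OF sconv grad pstar_min weight_nonneg] .

lemma dist_pstar_ustar_le: "n < N \<Longrightarrow> modulus * norm (pstar n - ustar n) \<le> lam * Mb"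
  using prox_minimizer_dist_le[OF sconv grad pstar_min ustar_min weight_nonneg lam_range(1)]
    mult_left_mono[OF M_bd lam_range(1)]
  unfolding modulus_def by (meson order_trans)

lemma dist_pstar_le:
  assumes n: "n < N"
  shows "modulus * norm (v - pstar n) \<le> modulus * (norm (gF n v) / mu) + lam * Mb"
proof -
  have "norm (v - pstar n) \<le> norm (v - ustar n) + norm (pstar n - ustar n)"
    using norm_triangle_ineq4[of "v - ustar n" "pstar n - ustar n"] by simp
  then have "norm (v - pstar n) \<le> norm (gF n v) / mu + norm (pstar n - ustar n)"
    using dist_ustar_le[OF n, of v] by linarith
  from mult_left_mono[OF this less_imp_le[OF modulus_pos]]
  show ?thesis
    using dist_pstar_ustar_le[OF n] unfolding distrib_left by linarith
qed

lemma personalized_step_small: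
  assumes n: "n < N" and eta: "0 \<le> eta" "eta * modulus \<le> 1"
  shows "(norm (w - eta *\<^sub>R ((1 - lam / 2) *\<^sub>R gF n w + lam *\<^sub>R (w - g)) - pstar n))\<^sup>2
    \<le> (1 - eta * modulus + eta) * (norm (w - pstar n))\<^sup>2
      + eta\<^sup>2 * ((1 - lam / 2) * norm (gF n w) + lam * (norm (gF n g) / mu + Mb))\<^sup>2
      + 2 * eta * lam\<^sup>2 / mu * gap g"
proof -
  define k where "k = 1 - lam / 2"
  define D where "D = w - pstar n"
  define V where "V = k *\<^sub>R gF n w + lam *\<^sub>R (w - g)"
  define B where "B = g - wstar"
  have "D \<bullet> (modulus *\<^sub>R D - V)
      = modulus * (norm D)\<^sup>2 - D \<bullet> (k *\<^sub>R gF n w + lam *\<^sub>R (w - wstar)) + lam * (D \<bullet> B)"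
    unfolding D_def V_def B_def power2_norm_eq_inner by (simp add: algebra_simps inner_diff_right)
  also have "\<dots> \<le> lam * (D \<bullet> B)"
    using pstar_inner_ge[OF n, of w] unfolding D_def k_def by simp
  also have "2 * \<dots> \<le> (norm D)\<^sup>2 + (lam * norm B)\<^sup>2"
    using sum_squares_bound[of "norm D" "lam * norm B"]
      mult_left_mono[OF norm_cauchy_schwarz[of D B] lam_range(1)]
    by (simp add: power2_eq_square algebra_simps)
  finally have step: "(norm (D - eta *\<^sub>R V))\<^sup>2 \<le> (1 - eta * modulus + eta) * (norm D)\<^sup>2
      + eta * (lam * norm B)\<^sup>2 + eta\<^sup>2 * (norm (modulus *\<^sub>R D - V))\<^sup>2"
    using eta modulus_pos by (intro norm_diff_scaleR_le) auto
  have "modulus *\<^sub>R D - V = lam *\<^sub>R (g - ustar n) - modulus *\<^sub>R (pstar n - ustar n)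
      - k *\<^sub>R (gF n w - mu *\<^sub>R (w - ustar n))"
    unfolding D_def V_def modulus_def k_def by (simp add: algebra_simps)
  then have "norm (modulus *\<^sub>R D - V)
      \<le> lam * norm (g - ustar n) + modulus * norm (pstar n - ustar n)
        + k * norm (gF n w - mu *\<^sub>R (w - ustar n))"
    using modulus_pos weight_nonneg lam_range unfolding k_def
    by (smt (verit) norm_scaleR norm_triangle_ineq4 abs_of_nonneg)
  also have "\<dots> \<le> lam * (norm (gF n g) / mu) + lam * Mb + k * norm (gF n w)"
    using mult_left_mono[OF dist_ustar_le[OF n] lam_range(1)] dist_pstar_ustar_le[OF n]
      mult_left_mono[OF strongly_convex_norm_gradient_shift_le[OF sconv grad ustar_min] weight_nonneg]
      n mu_pos
    unfolding k_def by (smt (verit) less_imp_le)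
  finally have R: "(norm (modulus *\<^sub>R D - V))\<^sup>2
      \<le> (k * norm (gF n w) + lam * (norm (gF n g) / mu + Mb))\<^sup>2"
    by (rule power_mono[OF order_trans]) (simp_all add: algebra_simps)
  have "(norm B)\<^sup>2 \<le> 2 / mu * gap g"
    using gap_quadratic_growth[of g] mu_pos unfolding B_def by (simp add: field_simps)
  from mult_left_mono[OF this, of "eta * lam\<^sup>2"]
  have "eta * (lam * norm B)\<^sup>2 \<le> 2 * eta * lam\<^sup>2 / mu * gap g"
    using eta by (simp add: power_mult_distrib mult.assoc mult.left_commute)
  then show ?thesis
    using step mult_left_mono[OF R zero_le_power2[of eta]] unfolding D_def V_def k_def
    by (simp add: algebra_simps)
qed

end

(* w, g and w' stand for the personalized model, the global model and the next personalized
   model of one client in one round. *)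
locale ditto_random_step = ditto_objectives Fs gF N mu lam Mb wstar ustar pstar + prob_space M
  for Fs :: "nat \<Rightarrow> 'v::euclidean_space \<Rightarrow> real" and gF N mu lam Mb wstar ustar pstar
    and M :: "'a measure" +
  fixes n :: nat and eta G0 :: real and w g w' :: "'a \<Rightarrow> 'v"
  assumes client: "n < N" and eta_pos: "0 < eta" and G0_nonneg: "0 \<le> G0"
    and measurable_w: "w \<in> borel_measurable M" and measurable_g: "g \<in> borel_measurable M"
    and next_eq: "\<And>x. w' x = w x - eta *\<^sub>R ((1 - lam / 2) *\<^sub>R gF n (w x) + lam *\<^sub>R (w x - g x))"
    and moment_w: "integrable M (\<lambda>x. (norm (gF n (w x)))\<^sup>2)"
      "expectation (\<lambda>x. (norm (gF n (w x)))\<^sup>2) \<le> G0\<^sup>2"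
    and moment_next: "integrable M (\<lambda>x. (norm (gF n (w' x)))\<^sup>2)"
      "expectation (\<lambda>x. (norm (gF n (w' x)))\<^sup>2) \<le> G0\<^sup>2"
    and moment_g: "\<And>m. m < N \<Longrightarrow> integrable M (\<lambda>x. (norm (gF m (g x)))\<^sup>2)"
      "\<And>m. m < N \<Longrightarrow> expectation (\<lambda>x. (norm (gF m (g x)))\<^sup>2) \<le> G0\<^sup>2"
begin

lemma measurable_gradient:
  "v \<in> borel_measurable M \<Longrightarrow> m < N \<Longrightarrow> (\<lambda>x. gF m (v x)) \<in> borel_measurable M"
  using measurable_compose borel_measurable_continuous_onI[OF grad_continuous] by blast

lemma measurable_next: "w' \<in> borel_measurable M"
  unfolding next_eq[abs_def] using measurable_w measurable_g measurable_gradient[OF measurable_w client]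
  by (intro borel_measurable_diff borel_measurable_add borel_measurable_scaleR) auto

lemma expectation_dist_pstar_le:
  assumes v: "v \<in> borel_measurable M" and moment: "integrable M (\<lambda>x. (norm (gF n (v x)))\<^sup>2)"
      "expectation (\<lambda>x. (norm (gF n (v x)))\<^sup>2) \<le> G0\<^sup>2"
  shows "integrable M (\<lambda>x. (norm (v x - pstar n))\<^sup>2)"
    and "modulus\<^sup>2 * expectation (\<lambda>x. (norm (v x - pstar n))\<^sup>2)
      \<le> ((1 - lam / 2) * G0 + lam * (G0 / mu + Mb))\<^sup>2"
proof -
  define S where "S = (\<lambda>x. (modulus / mu * norm (gF n (v x)) + lam * Mb)\<^sup>2)"
  have grad_v: "(\<lambda>x. norm (gF n (v x))) \<in> borel_measurable M"
    using measurable_gradient[OF v client] by measurable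
  have "integrable M S \<and> expectation S \<le> ((modulus / mu + 0) * G0 + lam * Mb)\<^sup>2"
    using expectation_square_affine_le[OF grad_v _ moment grad_v _ moment,
        where a = "modulus / mu" and b = 0 and c = "lam * Mb"]
      G0_nonneg modulus_pos mu_pos lam_range Mb_nonneg
    unfolding S_def by simp
  then have int_S: "integrable M S" and E_S: "expectation S \<le> (modulus / mu * G0 + lam * Mb)\<^sup>2"
    by simp_all
  have pointwise: "modulus\<^sup>2 * (norm (v x - pstar n))\<^sup>2 \<le> S x" for x
  proof -
    have "modulus * norm (v x - pstar n) \<le> modulus / mu * norm (gF n (v x)) + lam * Mb"
      using dist_pstar_le[OF client, of "v x"] by simp
    then show ?thesis
      unfolding S_def power_mult_distrib[symmetric] using modulus_pos by (intro power_mono) auto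
  qed
  show int_dist: "integrable M (\<lambda>x. (norm (v x - pstar n))\<^sup>2)"
  proof (rule Bochner_Integration.integrable_bound[where f = "\<lambda>x. S x / modulus\<^sup>2"])
    show "integrable M (\<lambda>x. S x / modulus\<^sup>2)"
      using int_S by simp
    show "AE x in M. norm ((norm (v x - pstar n))\<^sup>2) \<le> norm (S x / modulus\<^sup>2)"
      using pointwise modulus_pos
      by (intro AE_I2) (auto simp: field_simps intro: order_trans[OF _ abs_ge_self])
  qed (use v in measurable)
  have "modulus\<^sup>2 * expectation (\<lambda>x. (norm (v x - pstar n))\<^sup>2) \<le> expectation S"
    using pointwise int_dist int_S by (subst integral_mult_right_zero[symmetric]) (rule integral_mono, auto)
  moreover have "modulus / mu * G0 + lam * Mb = (1 - lam / 2) * G0 + lam * (G0 / mu + Mb)"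
    using mu_pos unfolding modulus_def by (simp add: field_simps)
  ultimately show "modulus\<^sup>2 * expectation (\<lambda>x. (norm (v x - pstar n))\<^sup>2)
      \<le> ((1 - lam / 2) * G0 + lam * (G0 / mu + Mb))\<^sup>2"
    using E_S by simp
qed

lemma integrable_gap: "integrable M (\<lambda>x. gap (g x))"
proof -
  define bound where
    "bound = (\<lambda>x. (\<Sum>m<N. (norm (gF m (g x)))\<^sup>2 / mu + Mb * norm (gF m (g x))) / real N)"
  have "integrable M (\<lambda>x. norm (gF m (g x)))" if "m < N" for m
    using measurable_compose[OF measurable_gradient[OF measurable_g that] borel_measurable_norm]
      moment_g(1)[OF that]
    by (rule square_integrable_imp_integrable)
  then have summand: "integrable M (\<lambda>x. (norm (gF m (g x)))\<^sup>2 / mu + Mb * norm (gF m (g x)))"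
    if "m < N" for m
    using moment_g(1)[OF that] that by simp
  have "integrable M bound"
    unfolding bound_def
    by (intro integrable_divide_zero Bochner_Integration.integrable_sum summand) simp
  moreover have "(\<lambda>x. gap (g x)) \<in> borel_measurable M"
  proof -
    have "(\<lambda>x. Fs m (g x)) \<in> borel_measurable M" if "m < N" for m
    proof -
      have "continuous_on UNIV (Fs m)"
        using has_derivative_continuous[OF grad[OF that]] by (blast intro: continuous_at_imp_continuous_on)
      then show ?thesis
        by (rule measurable_compose[OF measurable_g borel_measurable_continuous_onI])
    qed
    then have "(\<lambda>x. \<Sum>m<N. Fs m (g x)) \<in> borel_measurable M"
      by (intro borel_measurable_sum) simp
    then show ?thesis
      unfolding gap_def by (intro borel_measurable_diff borel_measurable_divide borel_measurable_const)
  qed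
  moreover have "AE x in M. norm (gap (g x)) \<le> norm (bound x)"
  proof (rule AE_I2)
    fix x
    show "norm (gap (g x)) \<le> norm (bound x)"
      using gap_nonneg[of "g x"] gap_le[of "g x"] abs_ge_self[of "bound x"]
      unfolding bound_def by simp
  qed
  ultimately show ?thesis
    by (rule Bochner_Integration.integrable_bound)
qed

lemma expected_step_large:
  assumes large: "1 \<le> eta * modulus"
  shows "expectation (\<lambda>x. (norm (w' x - pstar n))\<^sup>2)
    \<le> (1 - eta * modulus + eta) * expectation (\<lambda>x. (norm (w x - pstar n))\<^sup>2)
      + eta\<^sup>2 * ((1 - lam / 2) * G0 + lam * (G0 / mu + Mb))\<^sup>2"
proof -
  define G where "G = ((1 - lam / 2) * G0 + lam * (G0 / mu + Mb))\<^sup>2"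
  define e where "e = 1 - eta * modulus + eta"
  define P where "P = expectation (\<lambda>x. (norm (w' x - pstar n))\<^sup>2)"
  define D where "D = expectation (\<lambda>x. (norm (w x - pstar n))\<^sup>2)"
  have P: "modulus\<^sup>2 * P \<le> G" and D: "modulus\<^sup>2 * D \<le> G"
    unfolding P_def D_def G_def
    using expectation_dist_pstar_le(2)[OF measurable_next moment_next]
      expectation_dist_pstar_le(2)[OF measurable_w moment_w] by simp_all
  have D_nonneg: "0 \<le> D"
    unfolding D_def by simp
  have G_nonneg: "0 \<le> G"
    unfolding G_def by simp
  have sq_ge: "1 \<le> (eta * modulus)\<^sup>2"
    using large by (rule one_le_power)
  have "eta * modulus \<le> (eta * modulus)\<^sup>2"
    using mult_left_mono[OF large] large unfolding power2_eq_square by simp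
  then have one_minus_e: "1 - e \<le> (eta * modulus)\<^sup>2"
    unfolding e_def using eta_pos by linarith
  have "G \<le> e * (modulus\<^sup>2 * D) + (eta * modulus)\<^sup>2 * G"
  proof (cases "0 \<le> e")
    case True
    then have "0 \<le> e * (modulus\<^sup>2 * D)"
      using D_nonneg by simp
    moreover have "1 * G \<le> (eta * modulus)\<^sup>2 * G"
      using sq_ge G_nonneg by (rule mult_right_mono)
    ultimately show ?thesis
      by simp
  next
    case False
    then have "e * G \<le> e * (modulus\<^sup>2 * D)"
      using D by (intro mult_left_mono_neg) auto
    moreover have "(1 - e) * G \<le> (eta * modulus)\<^sup>2 * G"
      using one_minus_e G_nonneg by (rule mult_right_mono)
    ultimately show ?thesis
      by (simp add: left_diff_distrib)
  qed
  then have "modulus\<^sup>2 * P \<le> modulus\<^sup>2 * (e * D + eta\<^sup>2 * G)"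
    using P by (simp add: power_mult_distrib algebra_simps)
  then show ?thesis
    unfolding P_def D_def G_def e_def using modulus_pos by simp
qed

lemma expected_step_small:
  assumes small: "eta * modulus \<le> 1"
  shows "expectation (\<lambda>x. (norm (w' x - pstar n))\<^sup>2)
    \<le> (1 - eta * modulus + eta) * expectation (\<lambda>x. (norm (w x - pstar n))\<^sup>2)
      + eta\<^sup>2 * ((1 - lam / 2) * G0 + lam * (G0 / mu + Mb))\<^sup>2
      + 2 * eta * lam\<^sup>2 / mu * expectation (\<lambda>x. gap (g x))"
proof -
  define e where "e = 1 - eta * modulus + eta"
  define c where "c = 2 * eta * lam\<^sup>2 / mu"
  define Phi where "Phi = (\<lambda>x. ((1 - lam / 2) * norm (gF n (w x))
    + lam / mu * norm (gF n (g x)) + lam * Mb)\<^sup>2)"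
  have "integrable M Phi \<and> expectation Phi \<le> ((1 - lam / 2 + lam / mu) * G0 + lam * Mb)\<^sup>2"
    unfolding Phi_def
    using expectation_square_affine_le[where a = "1 - lam / 2" and b = "lam / mu" and c = "lam * Mb",
        OF measurable_compose[OF measurable_gradient[OF measurable_w client] borel_measurable_norm] _
        moment_w measurable_compose[OF measurable_gradient[OF measurable_g client] borel_measurable_norm] _
        moment_g[OF client] G0_nonneg weight_nonneg]
      lam_range mu_pos Mb_nonneg
    by simp
  moreover have "(1 - lam / 2 + lam / mu) * G0 + lam * Mb = (1 - lam / 2) * G0 + lam * (G0 / mu + Mb)"
    by (simp add: algebra_simps)
  ultimately have int_Phi: "integrable M Phi"
    and E_Phi: "expectation Phi \<le> ((1 - lam / 2) * G0 + lam * (G0 / mu + Mb))\<^sup>2"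
    by simp_all
  have pointwise: "(norm (w' x - pstar n))\<^sup>2
      \<le> e * (norm (w x - pstar n))\<^sup>2 + eta\<^sup>2 * Phi x + c * gap (g x)" for x
    using personalized_step_small[OF client less_imp_le[OF eta_pos] small, of "w x" "g x"]
    unfolding next_eq e_def c_def Phi_def by (simp add: algebra_simps)
  have int_D: "integrable M (\<lambda>x. (norm (w x - pstar n))\<^sup>2)"
    and int_next: "integrable M (\<lambda>x. (norm (w' x - pstar n))\<^sup>2)"
    using expectation_dist_pstar_le(1)[OF measurable_w moment_w]
      expectation_dist_pstar_le(1)[OF measurable_next moment_next] .
  have "expectation (\<lambda>x. (norm (w' x - pstar n))\<^sup>2)
      \<le> expectation (\<lambda>x. e * (norm (w x - pstar n))\<^sup>2 + eta\<^sup>2 * Phi x + c * gap (g x))"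
    using pointwise int_D int_next int_Phi integrable_gap by (intro integral_mono) auto
  also have "\<dots> = e * expectation (\<lambda>x. (norm (w x - pstar n))\<^sup>2) + eta\<^sup>2 * expectation Phi
      + c * expectation (\<lambda>x. gap (g x))"
    using int_D int_Phi integrable_gap by simp
  also have "\<dots> \<le> e * expectation (\<lambda>x. (norm (w x - pstar n))\<^sup>2)
      + eta\<^sup>2 * ((1 - lam / 2) * G0 + lam * (G0 / mu + Mb))\<^sup>2 + c * expectation (\<lambda>x. gap (g x))"
    using E_Phi by (simp add: mult_left_mono)
  finally show ?thesis
    unfolding e_def c_def .
qed

lemma expected_step:
  "expectation (\<lambda>x. (norm (w' x - pstar n))\<^sup>2)
    \<le> (1 - eta * modulus + eta) * expectation (\<lambda>x. (norm (w x - pstar n))\<^sup>2)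
      + eta\<^sup>2 * ((1 - lam / 2) * G0 + lam * (G0 / mu + Mb))\<^sup>2
      + 2 * eta * lam\<^sup>2 / mu * expectation (\<lambda>x. gap (g x))"
proof (cases "eta * modulus \<le> 1")
  case False
  have "0 \<le> 2 * eta * lam\<^sup>2 / mu * expectation (\<lambda>x. gap (g x))"
    using eta_pos mu_pos gap_nonneg by simp
  then show ?thesis
    using expected_step_large False by linarith
qed (rule expected_step_small)

end

lemma strict_mono_on_contraction_factor:
  fixes eta mu :: real
  assumes "0 < eta" and "2 < mu"
  shows "strict_mono_on A (\<lambda>l. 1 - eta * ((1 - l / 2) * mu + l) + eta)"
proof (rule strict_mono_onI)
  fix r s :: real
  assume "r < s"
  then have "0 < eta * ((s - r) * (mu / 2 - 1))"
    using assms by simp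
  moreover have "(1 - eta * ((1 - s / 2) * mu + s) + eta) - (1 - eta * ((1 - r / 2) * mu + r) + eta)
      = eta * ((s - r) * (mu / 2 - 1))"
    by (simp add: algebra_simps diff_divide_distrib)
  ultimately show "1 - eta * ((1 - r / 2) * mu + r) + eta < 1 - eta * ((1 - s / 2) * mu + s) + eta"
    by linarith
qed

context ditto_objectives
begin

lemma personalized_round:
  assumes prob: "prob_space M" and n: "n < N" and etaL: "0 < etaL" and G0: "0 \<le> G0"
    and noise: "\<And>m s. m < N \<Longrightarrow> s \<in> {1..t} \<Longrightarrow> z m s \<in> borel_measurable M"
    and moment_glob: "\<And>m. m < N \<Longrightarrow>
      integrable M (\<lambda>x. (norm (gF m (glob gF N C etaG w0 z t x)))\<^sup>2) \<and>
      prob_space.expectation M (\<lambda>x. (norm (gF m (glob gF N C etaG w0 z t x)))\<^sup>2) \<le> G0\<^sup>2"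
    and moment_pers: "\<And>s. s \<le> Suc t \<Longrightarrow>
      integrable M (\<lambda>x. (norm (gF n (pers gF N C etaG w0 z etaL lam p0 n s x)))\<^sup>2) \<and>
      prob_space.expectation M (\<lambda>x. (norm (gF n (pers gF N C etaG w0 z etaL lam p0 n s x)))\<^sup>2)
        \<le> G0\<^sup>2"
  shows "prob_space.expectation M
      (\<lambda>x. (norm (pers gF N C etaG w0 z etaL lam p0 n (Suc t) x - pstar n))\<^sup>2)
    \<le> (1 - etaL * modulus + etaL) *
        prob_space.expectation M (\<lambda>x. (norm (pers gF N C etaG w0 z etaL lam p0 n t x - pstar n))\<^sup>2)
      + (etaL\<^sup>2 + etaL\<^sup>2 * lam\<^sup>2) * ((1 - lam / 2) * G0 + lam * (G0 / mu + Mb))\<^sup>2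
      + (4 * etaL\<^sup>2 * lam\<^sup>2 + 2 * etaL * lam\<^sup>2) / mu *
        prob_space.expectation M (\<lambda>x. gap (glob gF N C etaG w0 z t x))"
proof -
  interpret prob_space M
    by (rule prob)
  have gF_measurable: "gF m \<in> borel_measurable borel" if "m < N" for m
    using grad_continuous[OF that] by (rule borel_measurable_continuous_onI)
  interpret ditto_random_step Fs gF N mu lam Mb wstar ustar pstar M n etaL G0
    "pers gF N C etaG w0 z etaL lam p0 n t" "glob gF N C etaG w0 z t"
    "pers gF N C etaG w0 z etaL lam p0 n (Suc t)"
  proof unfold_locales
    show "pers gF N C etaG w0 z etaL lam p0 n t \<in> borel_measurable M"
      by (rule borel_measurable_pers[OF gF_measurable noise n])
    show "glob gF N C etaG w0 z t \<in> borel_measurable M"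
      by (rule borel_measurable_glob[OF gF_measurable noise])
  qed (use n etaL G0 moment_glob moment_pers[of t] moment_pers[of "Suc t"] in simp_all)
  have "etaL\<^sup>2 * ((1 - lam / 2) * G0 + lam * (G0 / mu + Mb))\<^sup>2
      \<le> (etaL\<^sup>2 + etaL\<^sup>2 * lam\<^sup>2) * ((1 - lam / 2) * G0 + lam * (G0 / mu + Mb))\<^sup>2"
    by (simp add: distrib_right)
  moreover have "2 * etaL * lam\<^sup>2 / mu * expectation (\<lambda>x. gap (glob gF N C etaG w0 z t x))
      \<le> (4 * etaL\<^sup>2 * lam\<^sup>2 + 2 * etaL * lam\<^sup>2) / mu * expectation (\<lambda>x. gap (glob gF N C etaG w0 z t x))"
    using gap_nonneg etaL mu_pos by (intro mult_right_mono divide_right_mono) auto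
  ultimately show ?thesis
    using expected_step by linarith
qed

end

theorem lemma1:
  fixes M :: "'a measure"
    and Fs :: "nat \<Rightarrow> 'v::euclidean_space \<Rightarrow> real"
    and gF :: "nat \<Rightarrow> 'v \<Rightarrow> 'v"
    and z :: "nat \<Rightarrow> nat \<Rightarrow> 'a \<Rightarrow> 'v"
    and N T :: nat
    and mu L C etaG etaL lam eps delta \<Delta>s G0 Mb :: real
    and w0 wstar :: 'v and p0 ustar pstar :: "nat \<Rightarrow> 'v"
  assumes prob: "prob_space M"
    and N_pos: "N \<ge> 1"
    and C_pos: "C > 0" and etaG_pos: "etaG > 0" and etaL_pos: "etaL > 0"
    and lam_range: "0 \<le> lam" "lam \<le> 2"
    and eps_pos: "eps > 0" and delta_range: "0 < delta" "delta < 1"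
    and \<Delta>s_pos: "\<Delta>s > 0"
    (* gradients *)
    and grad: "\<And>n w. n < N \<Longrightarrow> (Fs n has_derivative (\<lambda>h. gF n w \<bullet> h)) (at w)"
    (* (i) strong convexity and L-smoothness of every F_n *)
    and mu_pos: "mu > 0" and L_pos: "L > 0"
    and sconv: "\<And>n. n < N \<Longrightarrow> strongly_convex mu (Fs n)"
    and smooth: "\<And>n w w'. n < N \<Longrightarrow> norm (gF n w - gF n w') \<le> L * norm (w - w')"
    (* (ii) *)
    and etaG_le: "etaG \<le> 2 / L"
    and mu_gt: "mu > (2 - 2 * lam) / (2 - lam)"
    (* minimizers *)
    and wstar_min: "\<And>w. (\<Sum>n<N. Fs n wstar) / real N \<le> (\<Sum>n<N. Fs n w) / real N"
    and ustar_min: "\<And>n u. n < N \<Longrightarrow> Fs n (ustar n) \<le> Fs n u"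
    and pstar_min: "\<And>n p. n < N \<Longrightarrow>
         (1 - lam / 2) * Fs n (pstar n) + lam / 2 * (norm (pstar n - wstar))\<^sup>2
       \<le> (1 - lam / 2) * Fs n p + lam / 2 * (norm (p - wstar))\<^sup>2"
    (* DP noise: i.i.d. N(0, sigma_u^2 I_d) over clients n < N and rounds 1..T *)
    and noise_gauss: "\<And>n t b. n < N \<Longrightarrow> t \<in> {1..T} \<Longrightarrow> b \<in> Basis \<Longrightarrow>
         distributed M lborel (\<lambda>x. z n t x \<bullet> b)
           (normal_density 0 (\<Delta>s * sqrt (2 * real T * real N * ln (1 / delta)) / (eps * real N)))"
    and noise_indep: "prob_space.indep_vars M (\<lambda>_. borel) (\<lambda>(n, t, b) x. z n t x \<bullet> b)
         ({..<N} \<times> {1..T} \<times> Basis)"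
    (* (iii) bounded expected squared gradient norms at the iterates *)
    and G0_nonneg: "G0 \<ge> 0"
    and grad_bd_glob: "\<And>n t. n < N \<Longrightarrow> t \<le> T \<Longrightarrow>
         integrable M (\<lambda>x. (norm (gF n (glob gF N C etaG w0 z t x)))\<^sup>2) \<and>
         prob_space.expectation M (\<lambda>x. (norm (gF n (glob gF N C etaG w0 z t x)))\<^sup>2) \<le> G0\<^sup>2"
    and grad_bd_pers: "\<And>n t. n < N \<Longrightarrow> t \<le> T \<Longrightarrow>
         integrable M (\<lambda>x. (norm (gF n (pers gF N C etaG w0 z etaL lam p0 n t x)))\<^sup>2) \<and>
         prob_space.expectation M (\<lambda>x. (norm (gF n (pers gF N C etaG w0 z etaL lam p0 n t x)))\<^sup>2)
           \<le> G0\<^sup>2"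
    (* (iv) *)
    and M_bd: "\<And>n. n < N \<Longrightarrow> norm (ustar n - wstar) \<le> Mb"
  shows "(\<forall>n<N. \<forall>t<T.
           prob_space.expectation M
             (\<lambda>x. (norm (pers gF N C etaG w0 z etaL lam p0 n (Suc t) x - pstar n))\<^sup>2)
         \<le> (1 - etaL * ((1 - lam / 2) * mu + lam) + etaL) *
             prob_space.expectation M
               (\<lambda>x. (norm (pers gF N C etaG w0 z etaL lam p0 n t x - pstar n))\<^sup>2)
           + (etaL\<^sup>2 + etaL\<^sup>2 * lam\<^sup>2) * ((1 - lam / 2) * G0 + lam * (G0 / mu + Mb))\<^sup>2
           + (4 * etaL\<^sup>2 * lam\<^sup>2 + 2 * etaL * lam\<^sup>2) / mu *
             prob_space.expectation M
               (\<lambda>x. (\<Sum>m<N. Fs m (glob gF N C etaG w0 z t x)) / real N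
                    - (\<Sum>m<N. Fs m wstar) / real N))
       \<and> (mu > 2 \<longrightarrow> strict_mono_on {0..2} (\<lambda>l. 1 - etaL * ((1 - l / 2) * mu + l) + etaL))"
proof -
  interpret ditto_objectives Fs gF N mu lam Mb wstar ustar pstar
  proof unfold_locales
    show "continuous_on UNIV (gF n)" if "n < N" for n
      using smooth[OF that] L_pos
      by (intro lipschitz_on_continuous_on lipschitz_onI) (auto simp: dist_norm)
  qed (use N_pos grad mu_pos sconv lam_range wstar_min ustar_min pstar_min M_bd in auto)
  have noise: "z n s \<in> borel_measurable M" if "n < N" "s \<in> {1..T}" for n s
    using distributed_measurable[OF noise_gauss[OF that]]
    by (simp add: borel_measurable_euclidean_space[of "z n s"])
  have "\<forall>n<N. \<forall>t<T. prob_space.expectation M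
      (\<lambda>x. (norm (pers gF N C etaG w0 z etaL lam p0 n (Suc t) x - pstar n))\<^sup>2)
    \<le> (1 - etaL * modulus + etaL) *
        prob_space.expectation M (\<lambda>x. (norm (pers gF N C etaG w0 z etaL lam p0 n t x - pstar n))\<^sup>2)
      + (etaL\<^sup>2 + etaL\<^sup>2 * lam\<^sup>2) * ((1 - lam / 2) * G0 + lam * (G0 / mu + Mb))\<^sup>2
      + (4 * etaL\<^sup>2 * lam\<^sup>2 + 2 * etaL * lam\<^sup>2) / mu *
        prob_space.expectation M (\<lambda>x. gap (glob gF N C etaG w0 z t x))"
    by (intro allI impI personalized_round[OF prob _ etaL_pos G0_nonneg])
      (use noise grad_bd_glob grad_bd_pers in auto)
  then show ?thesis
    using strict_mono_on_contraction_factor[OF etaL_pos] unfolding modulus_def gap_def by simp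
qed

end
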